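(* Let $0<\lambda\leq\Lambda$ and let $F:\mathcal{S}(d)\to\mathbb{R}$ satisfy \[ \lambda\|N\|\leq F(M+N)-F(M)\leq \Lambda\|N\|\quad\text{for all } M,N\in\mathcal{S}(d),\ N\geq 0, \] and $F(0)=0$. Suppose the recession profile $F^*(M):=\lim_{\mu\to 0}\mu F(\mu^{-1}M)$ is convex. For $\varepsilon>0$ let $F_\varepsilon(M):=\int_{\mathbb{R}^{d^*}}F(M-Q)\eta_\varepsilon(Q)\,dQ$. Then for every $\varepsilon>0$ the recession profile $(F_\varepsilon)^*(M):=\lim_{\mu\to 0}\mu F_\varepsilon(\mu^{-1}M)$ is convex.
   Context: $\mathcal{S}(d)$ is the space of real symmetric $d\times d$ matrices, identified with $\mathbb{R}^{d^*}$, $d^*:=d(d+1)/2$; $\|\cdot\|$ is a matrix norm; $N\geq 0$ means positive semidefinite. $(\eta_\varepsilon)_{\varepsilon>0}\subset\mathcal{C}^\infty(\mathbb{R}^{d^*})$ is a family of standard mollifiers. The recession profile of an operator $G$ is $G^*(M)=\lim_{\mu\to0}\mu G(\mu^{-1}M)$. *)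

theory Defs
  imports "HOL-Analysis.Analysis"
begin

definition sym_mats :: "(real^'n^'n) set" where
  "sym_mats = {M. transpose M = M}"

definition psd :: "real^'n^'n \<Rightarrow> bool" where
  "psd N \<longleftrightarrow> (\<forall>x. 0 \<le> x \<bullet> (N *v x))"

definition is_norm_on :: "'a::real_vector set \<Rightarrow> ('a \<Rightarrow> real) \<Rightarrow> bool" where
  "is_norm_on S nrm \<longleftrightarrow>
     (\<forall>x\<in>S. 0 \<le> nrm x \<and> (nrm x = 0 \<longleftrightarrow> x = 0)) \<and>
     (\<forall>x\<in>S. \<forall>c. nrm (c *\<^sub>R x) = \<bar>c\<bar> * nrm x) \<and>
     (\<forall>x\<in>S. \<forall>y\<in>S. nrm (x + y) \<le> nrm x + nrm y)"

coinductive smooth_fun :: "('a::real_normed_vector \<Rightarrow> real) \<Rightarrow> bool" where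
  "continuous_on UNIV f \<Longrightarrow> (\<forall>x. f differentiable (at x)) \<Longrightarrow>
   (\<forall>v. smooth_fun (\<lambda>x. frechet_derivative f (at x) v)) \<Longrightarrow> smooth_fun f"

definition mollifier :: "('a::euclidean_space \<Rightarrow> real) \<Rightarrow> bool" where
  "mollifier \<eta> \<longleftrightarrow> smooth_fun \<eta> \<and> (\<forall>x. 0 \<le> \<eta> x) \<and> (\<forall>x. 1 < norm x \<longrightarrow> \<eta> x = 0) \<and>
     integrable lborel \<eta> \<and> integral\<^sup>L lborel \<eta> = 1"

definition mollify :: "('a::euclidean_space \<Rightarrow> real) \<Rightarrow> real \<Rightarrow> 'a \<Rightarrow> real" where
  "mollify \<eta> \<epsilon> x = (1 / \<epsilon>) ^ DIM('a) * \<eta> ((1 / \<epsilon>) *\<^sub>R x)"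

definition recession :: "('a::real_vector \<Rightarrow> real) \<Rightarrow> 'a \<Rightarrow> real" where
  "recession G M = Lim (at_right 0) (\<lambda>\<mu>. \<mu> * G ((1 / \<mu>) *\<^sub>R M))"

definition recession_exists :: "('a::real_vector \<Rightarrow> real) \<Rightarrow> 'a set \<Rightarrow> bool" where
  "recession_exists G S \<longleftrightarrow>
     (\<forall>M\<in>S. \<exists>L. ((\<lambda>\<mu>. \<mu> * G ((1 / \<mu>) *\<^sub>R M)) \<longlongrightarrow> L) (at_right 0))"

text \<open>F_eps(M) = int F(M - Q) eta_eps(Q) dQ, with S(d) identified with R^(d*) via iota.\<close>
definition mollified :: "('m::euclidean_space \<Rightarrow> real^'n^'n) \<Rightarrow> ('m \<Rightarrow> real) \<Rightarrow> real
     \<Rightarrow> (real^'n^'n \<Rightarrow> real) \<Rightarrow> real^'n^'n \<Rightarrow> real" where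
  "mollified \<iota> \<eta> \<epsilon> F M = integral\<^sup>L lborel (\<lambda>Q. F (M - \<iota> Q) * mollify \<eta> \<epsilon> Q)"

end

(* The ellipticity bounds make F Lipschitz on S(d): an increment N is the difference of
   the increments N + s I and s I, both positive semidefinite once s >= d^2 |N|, so both are
   controlled by the two-sided bounds. Consequently F_eps - c F, with c = int eta_eps, is bounded
   on S(d) by K int |Q| eta_eps(Q) dQ. A bounded perturbation disappears in mu G(M / mu) as
   mu -> 0, so (F_eps)^* = c F^*, which is convex because c >= 0. *)

theory Submission
  imports Defs
begin

lemma subspace_sym_mats: "subspace sym_mats"
  unfolding subspace_def sym_mats_def transpose_def by (auto simp: vec_eq_iff)

lemma quadratic_form_bound:
  fixes A :: "real^'n^'n"
  shows "\<bar>x \<bullet> (A *v x)\<bar> \<le> real CARD('n) ^ 2 * norm A * norm x ^ 2"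
proof -
  have "norm (A *v x) \<le> onorm ((*v) A) * norm x"
    by (rule onorm) (simp add: linear_linear[symmetric])
  also have "\<dots> \<le> real CARD('n) ^ 2 * norm A * norm x"
  proof (rule mult_right_mono)
    show "onorm ((*v) A) \<le> real CARD('n) ^ 2 * norm A"
      unfolding power2_eq_square
      by (rule onorm_le_matrix_component)
        (metis component_le_norm_cart Finite_Cartesian_Product.norm_nth_le order_trans)
  qed simp
  finally have "norm x * norm (A *v x) \<le> real CARD('n) ^ 2 * norm A * norm x ^ 2"
    by (simp add: mult_left_mono power2_eq_square mult.commute mult.left_commute)
  with Cauchy_Schwarz_ineq2[of x "A *v x"] show ?thesis by linarith
qed

lemma psd_scaleR_mat_1_add:
  fixes A :: "real^'n^'n"
  assumes "real CARD('n) ^ 2 * norm A \<le> s"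
  shows "psd (s *\<^sub>R mat 1 + A)"
  unfolding psd_def
proof
  fix x :: "real^'n"
  have "x \<bullet> ((s *\<^sub>R mat 1 + A) *v x) = s * norm x ^ 2 + x \<bullet> (A *v x)"
    by (simp add: matrix_vector_mult_add_rdistrib inner_add_right power2_norm_eq_inner
        scaleR_matrix_vector_assoc[symmetric])
  moreover have "real CARD('n) ^ 2 * norm A * norm x ^ 2 \<le> s * norm x ^ 2"
    using assms by (simp add: mult_right_mono)
  ultimately show "0 \<le> x \<bullet> ((s *\<^sub>R mat 1 + A) *v x)"
    using quadratic_form_bound[of x A] by linarith
qed

lemma is_norm_on_zero:
  assumes "subspace S" "is_norm_on S nrm"
  shows "nrm 0 = 0"
  using assms subspace_0 unfolding is_norm_on_def by blast

lemma is_norm_on_sum_le: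
  assumes S: "subspace S" and nrm: "is_norm_on S nrm" and f: "\<And>i. i \<in> I \<Longrightarrow> f i \<in> S"
  shows "nrm (sum f I) \<le> (\<Sum>i\<in>I. nrm (f i))"
  using f
proof (induction I rule: infinite_finite_induct)
  case (insert i I)
  have "nrm (f i + sum f I) \<le> nrm (f i) + nrm (sum f I)"
    using nrm insert.prems subspace_sum[OF S, of I f] unfolding is_norm_on_def by simp
  with insert show ?case by simp
qed (simp_all add: is_norm_on_zero[OF S nrm])

lemma is_norm_on_linear_bounded:
  fixes \<iota> :: "'m::euclidean_space \<Rightarrow> 'a::real_vector"
  assumes lin: "linear \<iota>" and range: "range \<iota> \<subseteq> S" and S: "subspace S"
    and nrm: "is_norm_on S nrm"
  shows "\<exists>C\<ge>0. \<forall>R. nrm (\<iota> R) \<le> C * norm R"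
proof (intro exI[of _ "\<Sum>b\<in>Basis. nrm (\<iota> b)"] conjI allI)
  have \<iota>S: "\<iota> x \<in> S" for x using range by auto
  show "0 \<le> (\<Sum>b\<in>Basis. nrm (\<iota> b))"
    using nrm \<iota>S unfolding is_norm_on_def by (auto intro: sum_nonneg)
  fix R :: 'm
  have "\<iota> R = \<iota> (\<Sum>b\<in>Basis. (R \<bullet> b) *\<^sub>R b)"
    by (simp add: euclidean_representation)
  also have "\<dots> = (\<Sum>b\<in>Basis. (R \<bullet> b) *\<^sub>R \<iota> b)"
    using lin by (simp add: linear_sum linear_scale)
  finally have expand: "\<iota> R = (\<Sum>b\<in>Basis. (R \<bullet> b) *\<^sub>R \<iota> b)" .
  have "nrm (\<iota> R) \<le> (\<Sum>b\<in>Basis. nrm ((R \<bullet> b) *\<^sub>R \<iota> b))"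
    unfolding expand by (intro is_norm_on_sum_le[OF S nrm] subspace_scale[OF S] \<iota>S)
  also have "\<dots> = (\<Sum>b\<in>Basis. \<bar>R \<bullet> b\<bar> * nrm (\<iota> b))"
    using nrm \<iota>S unfolding is_norm_on_def by auto
  also have "\<dots> \<le> (\<Sum>b\<in>Basis. norm R * nrm (\<iota> b))"
    using nrm \<iota>S unfolding is_norm_on_def
    by (intro sum_mono mult_right_mono) (auto simp: Basis_le_norm)
  finally show "nrm (\<iota> R) \<le> (\<Sum>b\<in>Basis. nrm (\<iota> b)) * norm R"
    by (simp add: sum_distrib_left mult.commute)
qed

lemma elliptic_increment_bound:
  fixes F nrm :: "real^'n^'n \<Rightarrow> real"
  assumes nrm: "is_norm_on sym_mats nrm" and lam: "0 \<le> lam" "lam \<le> Lam"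
    and ellip: "\<And>M N. M \<in> sym_mats \<Longrightarrow> N \<in> sym_mats \<Longrightarrow> psd N \<Longrightarrow>
        lam * nrm N \<le> F (M + N) - F M \<and> F (M + N) - F M \<le> Lam * nrm N"
    and B: "B \<in> sym_mats" and N: "N \<in> sym_mats"
  shows "\<bar>F (B + N) - F B\<bar> \<le> Lam * (real CARD('n) ^ 2 * norm N * nrm (mat 1) + nrm N)"
proof -
  define s where "s = real CARD('n) ^ 2 * norm N"
  define I :: "real^'n^'n" where "I = s *\<^sub>R mat 1"
  have s: "0 \<le> s" unfolding s_def by simp
  have I: "I \<in> sym_mats" unfolding I_def sym_mats_def by (simp add: transpose_scalar)
  have psd_I: "psd I" using psd_scaleR_mat_1_add[of 0 s] s by (simp add: I_def)
  have psd_IN: "psd (I + N)" using psd_scaleR_mat_1_add[of N s] by (simp add: I_def s_def)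
  have IN: "I + N \<in> sym_mats" using I N subspace_add subspace_sym_mats by blast
  have BN: "B + N \<in> sym_mats" using B N subspace_add subspace_sym_mats by blast
  have nrm_I: "nrm I = s * nrm (mat 1)"
    using nrm s unfolding is_norm_on_def I_def sym_mats_def by simp
  have "nrm (I + N) \<le> nrm I + nrm N"
    using nrm I N unfolding is_norm_on_def by blast
  moreover have "0 \<le> nrm (I + N)"
    using nrm IN unfolding is_norm_on_def by blast
  ultimately have nrm_IN: "0 \<le> nrm (I + N)" "nrm (I + N) \<le> s * nrm (mat 1) + nrm N"
    using nrm_I by simp_all
  have "0 \<le> nrm I" "0 \<le> nrm N" using nrm I N unfolding is_norm_on_def by auto
  then have nonneg: "0 \<le> lam * nrm I" "0 \<le> lam * nrm (I + N)" "0 \<le> Lam * nrm N"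
    using lam nrm_IN by simp_all
  have "Lam * nrm (I + N) \<le> Lam * (s * nrm (mat 1) + nrm N)"
    using lam nrm_IN by (simp add: mult_left_mono)
  \<comment> \<open>Pass from B to B + N through B + N + s I, which lies above both of them.\<close>
  moreover have "F (B + N) - F B = (F (B + (I + N)) - F B) - (F ((B + N) + I) - F (B + N))"
    by (simp add: algebra_simps)
  moreover note ellip[OF B IN psd_IN] ellip[OF BN I psd_I]
  ultimately show ?thesis
    using nonneg unfolding nrm_I s_def[symmetric] distrib_left by linarith
qed

lemma elliptic_imp_lipschitz_on:
  fixes F nrm :: "real^'n^'n \<Rightarrow> real" and \<iota> :: "'m::euclidean_space \<Rightarrow> real^'n^'n"
  assumes lin: "linear \<iota>" and range: "range \<iota> \<subseteq> sym_mats"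
    and nrm: "is_norm_on sym_mats nrm" and lam: "0 \<le> lam" "lam \<le> Lam"
    and ellip: "\<And>M N. M \<in> sym_mats \<Longrightarrow> N \<in> sym_mats \<Longrightarrow> psd N \<Longrightarrow>
        lam * nrm N \<le> F (M + N) - F M \<and> F (M + N) - F M \<le> Lam * nrm N"
  shows "\<exists>K. \<forall>A\<in>sym_mats. K-lipschitz_on UNIV (\<lambda>Q. F (A - \<iota> Q))"
proof -
  obtain C where C: "C \<ge> 0" "\<And>R. nrm (\<iota> R) \<le> C * norm R"
    using is_norm_on_linear_bounded[OF lin range subspace_sym_mats nrm] by blast
  obtain B where B: "B > 0" "\<And>R. norm (\<iota> R) \<le> B * norm R"
    using linear_bounded_pos[OF lin] by blast
  define K where "K = Lam * (real CARD('n) ^ 2 * B * nrm (mat 1) + C)"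
  have nrm_1: "0 \<le> nrm (mat 1 :: real^'n^'n)"
    using nrm unfolding is_norm_on_def sym_mats_def by simp
  have "K-lipschitz_on UNIV (\<lambda>Q. F (A - \<iota> Q))" if A: "A \<in> sym_mats" for A
  proof (rule lipschitz_onI)
    show "0 \<le> K" unfolding K_def using lam B C nrm_1 by simp
    fix x y :: 'm
    have Ay: "A - \<iota> y \<in> sym_mats" using A range subspace_diff[OF subspace_sym_mats] by blast
    have \<iota>yx: "\<iota> (y - x) \<in> sym_mats" using range by blast
    have shift: "(A - \<iota> y) + \<iota> (y - x) = A - \<iota> x" using lin by (simp add: linear_diff)
    have "\<bar>F (A - \<iota> x) - F (A - \<iota> y)\<bar>
        \<le> Lam * (real CARD('n) ^ 2 * norm (\<iota> (y - x)) * nrm (mat 1) + nrm (\<iota> (y - x)))"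
      using elliptic_increment_bound[OF nrm lam ellip Ay \<iota>yx] unfolding shift .
    also have "\<dots> \<le> K * norm (y - x)"
    proof -
      have "real CARD('n) ^ 2 * norm (\<iota> (y - x)) * nrm (mat 1)
          \<le> real CARD('n) ^ 2 * (B * norm (y - x)) * nrm (mat 1)"
        using B(2) nrm_1 by (intro mult_right_mono mult_left_mono) auto
      with C(2)[of "y - x"] have "real CARD('n) ^ 2 * norm (\<iota> (y - x)) * nrm (mat 1) + nrm (\<iota> (y - x))
          \<le> (real CARD('n) ^ 2 * B * nrm (mat 1) + C) * norm (y - x)"
        by (simp add: algebra_simps)
      from mult_left_mono[OF this, of Lam] lam show ?thesis
        unfolding K_def by (simp add: mult.assoc)
    qed
    finally show "dist (F (A - \<iota> x)) (F (A - \<iota> y)) \<le> K * dist x y"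
      by (simp add: dist_real_def dist_norm norm_minus_commute)
  qed
  then show ?thesis by blast
qed

lemma integrable_mult_compact_support:
  fixes g e :: "'m::euclidean_space \<Rightarrow> real"
  assumes g: "continuous_on UNIV g" and e: "continuous_on UNIV e"
    and supp: "\<And>x. x \<notin> cball 0 r \<Longrightarrow> e x = 0"
  shows "integrable lborel (\<lambda>x. g x * e x)"
proof -
  have "integrable lborel (\<lambda>x. indicator (cball 0 r) x *\<^sub>R (g x * e x))"
    by (rule borel_integrable_compact[OF compact_cball])
      (rule continuous_on_subset[OF continuous_on_mult[OF g e] subset_UNIV])
  moreover have "(\<lambda>x. indicator (cball 0 r) x *\<^sub>R (g x * e x)) = (\<lambda>x. g x * e x)"
    by (rule ext) (use supp in \<open>auto simp: indicator_def\<close>)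
  ultimately show ?thesis by simp
qed

lemma lipschitz_weighted_integral_deviation:
  fixes G e :: "'m::euclidean_space \<Rightarrow> real"
  assumes G: "K-lipschitz_on UNIV G" and e: "continuous_on UNIV e"
    and e_nonneg: "\<And>x. 0 \<le> e x" and supp: "\<And>x. x \<notin> cball 0 r \<Longrightarrow> e x = 0"
  shows "\<bar>integral\<^sup>L lborel (\<lambda>x. G x * e x) - G 0 * integral\<^sup>L lborel e\<bar>
    \<le> K * integral\<^sup>L lborel (\<lambda>x. norm x * e x)"
proof -
  have int_G: "integrable lborel (\<lambda>x. G x * e x)"
    using integrable_mult_compact_support[OF lipschitz_on_continuous_on[OF G] e supp] .
  have int_e: "integrable lborel e"
    using integrable_mult_compact_support[of "\<lambda>_. 1", OF _ e supp] by simp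
  have int_norm: "integrable lborel (\<lambda>x. norm x * e x)"
    by (rule integrable_mult_compact_support[OF _ e supp]) (intro continuous_intros)
  have "\<bar>(G x - G 0) * e x\<bar> \<le> K * (norm x * e x)" for x
  proof -
    have "\<bar>G x - G 0\<bar> \<le> K * norm x"
      using lipschitz_onD[OF G, of x 0] by (simp add: dist_real_def)
    then have "\<bar>G x - G 0\<bar> * e x \<le> K * norm x * e x"
      using e_nonneg[of x] by (rule mult_right_mono)
    then show ?thesis
      using e_nonneg[of x] by (simp add: abs_mult mult.assoc)
  qed
  then have "norm (integral\<^sup>L lborel (\<lambda>x. (G x - G 0) * e x))
      \<le> integral\<^sup>L lborel (\<lambda>x. K * (norm x * e x))"
    using int_G int_e int_norm
    by (intro Bochner_Integration.integral_norm_bound_integral) (auto simp: left_diff_distrib)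
  then show ?thesis
    using int_G int_e by (simp add: left_diff_distrib)
qed

lemma smooth_fun_continuous_on: "smooth_fun f \<Longrightarrow> continuous_on UNIV f"
  by (auto elim: smooth_fun.cases)

lemma
  fixes \<eta> :: "'a::euclidean_space \<Rightarrow> real"
  assumes \<eta>: "mollifier \<eta>" and \<epsilon>: "0 < \<epsilon>"
  shows continuous_on_mollify: "continuous_on UNIV (mollify \<eta> \<epsilon>)"
    and mollify_nonneg: "0 \<le> mollify \<eta> \<epsilon> x"
    and mollify_eq_0: "x \<notin> cball 0 \<epsilon> \<Longrightarrow> mollify \<eta> \<epsilon> x = 0"
proof -
  have "continuous_on UNIV \<eta>"
    using \<eta> smooth_fun_continuous_on unfolding mollifier_def by blast
  then have "continuous_on UNIV (\<lambda>x. \<eta> ((1 / \<epsilon>) *\<^sub>R x))"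
    by (rule continuous_on_compose2) (auto intro: continuous_intros)
  then show "continuous_on UNIV (mollify \<eta> \<epsilon>)"
    unfolding mollify_def[abs_def] by (intro continuous_intros)
  show "0 \<le> mollify \<eta> \<epsilon> x"
    using \<eta> \<epsilon> unfolding mollify_def mollifier_def by simp
  assume "x \<notin> cball 0 \<epsilon>"
  then have "1 < norm ((1 / \<epsilon>) *\<^sub>R x)" using \<epsilon> by (simp add: field_simps)
  then show "mollify \<eta> \<epsilon> x = 0"
    using \<eta> unfolding mollify_def mollifier_def by simp
qed

lemma mollified_deviation_bound:
  fixes F :: "real^'n^'n \<Rightarrow> real" and \<iota> :: "'m::euclidean_space \<Rightarrow> real^'n^'n"
  assumes "linear \<iota>" "mollifier \<eta>" "0 < \<epsilon>" "K-lipschitz_on UNIV (\<lambda>Q. F (A - \<iota> Q))"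
  shows "\<bar>mollified \<iota> \<eta> \<epsilon> F A - integral\<^sup>L lborel (mollify \<eta> \<epsilon>) * F A\<bar>
    \<le> K * integral\<^sup>L lborel (\<lambda>Q. norm Q * mollify \<eta> \<epsilon> Q)"
  using lipschitz_weighted_integral_deviation[OF assms(4) continuous_on_mollify mollify_nonneg
      mollify_eq_0] assms(1-3)
  by (simp add: mollified_def linear_0 mult.commute)

lemma recession_eqI:
  assumes "((\<lambda>\<mu>. \<mu> * G ((1 / \<mu>) *\<^sub>R M)) \<longlongrightarrow> L) (at_right 0)"
  shows "recession G M = L"
  unfolding recession_def using assms by (rule tendsto_Lim[rotated]) simp

lemma tendsto_recession_bounded_perturbation:
  assumes S: "cone S" and F: "recession_exists F S" and M: "M \<in> S"
    and bound: "\<And>M. M \<in> S \<Longrightarrow> \<bar>G M - c * F M\<bar> \<le> D"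
  shows "((\<lambda>\<mu>. \<mu> * G ((1 / \<mu>) *\<^sub>R M)) \<longlongrightarrow> c * recession F M) (at_right 0)"
proof -
  obtain L where L: "((\<lambda>\<mu>. \<mu> * F ((1 / \<mu>) *\<^sub>R M)) \<longlongrightarrow> L) (at_right 0)"
    using F M unfolding recession_exists_def by blast
  let ?R = "\<lambda>\<mu>. \<mu> * G ((1 / \<mu>) *\<^sub>R M) - c * (\<mu> * F ((1 / \<mu>) *\<^sub>R M))"
  have "\<forall>\<^sub>F \<mu> in at_right 0. norm (?R \<mu>) \<le> \<mu> * D"
    using eventually_at_right_less[of "0::real"]
  proof (rule eventually_mono)
    fix \<mu> :: real assume "0 < \<mu>"
    then have "(1 / \<mu>) *\<^sub>R M \<in> S" using S M unfolding cone_def by simp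
    with \<open>0 < \<mu>\<close> bound have "\<mu> * \<bar>G ((1 / \<mu>) *\<^sub>R M) - c * F ((1 / \<mu>) *\<^sub>R M)\<bar> \<le> \<mu> * D"
      by (simp add: mult_left_mono)
    moreover have "?R \<mu> = \<mu> * (G ((1 / \<mu>) *\<^sub>R M) - c * F ((1 / \<mu>) *\<^sub>R M))"
      by (simp add: algebra_simps)
    ultimately show "norm (?R \<mu>) \<le> \<mu> * D"
      using \<open>0 < \<mu>\<close> by (simp add: abs_mult)
  qed
  moreover have "((\<lambda>\<mu>. \<mu> * D) \<longlongrightarrow> 0) (at_right 0)"
    by (intro tendsto_mult_left_zero tendsto_ident_at)
  ultimately have "(?R \<longlongrightarrow> 0) (at_right 0)"
    by (rule Lim_null_comparison)
  then have "((\<lambda>\<mu>. ?R \<mu> + c * (\<mu> * F ((1 / \<mu>) *\<^sub>R M))) \<longlongrightarrow> 0 + c * L) (at_right 0)"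
    by (intro tendsto_add tendsto_mult_left L)
  then show ?thesis
    using recession_eqI[OF L] by simp
qed

lemma recession_bounded_perturbation:
  assumes "cone S" and "recession_exists F S"
    and "\<And>M. M \<in> S \<Longrightarrow> \<bar>G M - c * F M\<bar> \<le> D"
  shows recession_exists_bounded_perturbation: "recession_exists G S"
    and recession_eq_bounded_perturbation: "M \<in> S \<Longrightarrow> recession G M = c * recession F M"
  using tendsto_recession_bounded_perturbation[OF assms(1,2) _ assms(3)] recession_eqI
  unfolding recession_exists_def by blast+

lemma convex_on_eq:
  assumes "convex_on S f" and "\<And>x. x \<in> S \<Longrightarrow> f x = g x"
  shows "convex_on S g"
proof (rule convex_onI)
  show S: "convex S" using assms(1) by (rule convex_on_imp_convex)
  fix t :: real and x y assume "0 < t" "t < 1" "x \<in> S" "y \<in> S"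
  moreover from this have "(1 - t) *\<^sub>R x + t *\<^sub>R y \<in> S"
    using S by (simp add: convexD)
  ultimately show "g ((1 - t) *\<^sub>R x + t *\<^sub>R y) \<le> (1 - t) * g x + t * g y"
    using convex_onD[OF assms(1), of t x y] assms(2) by simp
qed

theorem proposition3p2:
  fixes F :: "real^'n^'n \<Rightarrow> real"
    and nrm :: "real^'n^'n \<Rightarrow> real"
    and \<iota> :: "'m::euclidean_space \<Rightarrow> real^'n^'n"
    and \<eta> :: "'m \<Rightarrow> real"
    and lam Lam :: real and eps :: real
  assumes dim: "DIM('m) = CARD('n) * (CARD('n) + 1) div 2"
    and iota_lin: "linear \<iota>" and iota_inj: "inj \<iota>" and iota_range: "range \<iota> = sym_mats"
    and nrm: "is_norm_on sym_mats nrm"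
    and moll: "mollifier \<eta>"
    and lam_pos: "0 < lam" "lam \<le> Lam"
    and ellip: "\<And>M N. M \<in> sym_mats \<Longrightarrow> N \<in> sym_mats \<Longrightarrow> psd N \<Longrightarrow>
        lam * nrm N \<le> F (M + N) - F M \<and> F (M + N) - F M \<le> Lam * nrm N"
    and F0: "F 0 = 0"
    and rec_ex: "recession_exists F sym_mats"
    and rec_cvx: "convex_on sym_mats (recession F)"
    and eps_pos: "0 < eps"
  shows "recession_exists (mollified \<iota> \<eta> eps F) sym_mats
       \<and> convex_on sym_mats (recession (mollified \<iota> \<eta> eps F))"
proof -
  obtain K where K: "\<And>A. A \<in> sym_mats \<Longrightarrow> K-lipschitz_on UNIV (\<lambda>Q. F (A - \<iota> Q))"
    using elliptic_imp_lipschitz_on[OF iota_lin _ nrm _ lam_pos(2) ellip] iota_range lam_pos(1) by force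
  define c where "c = integral\<^sup>L lborel (mollify \<eta> eps)"
  have c: "0 \<le> c"
    unfolding c_def using mollify_nonneg[OF moll eps_pos] by simp
  have "\<bar>mollified \<iota> \<eta> eps F A - c * F A\<bar> \<le> K * integral\<^sup>L lborel (\<lambda>Q. norm Q * mollify \<eta> eps Q)"
    if "A \<in> sym_mats" for A
    unfolding c_def using mollified_deviation_bound[OF iota_lin moll eps_pos K[OF that]] .
  note perturbation = recession_bounded_perturbation[OF subspace_imp_cone[OF subspace_sym_mats] rec_ex this]
  have "convex_on sym_mats (recession (mollified \<iota> \<eta> eps F))"
    using convex_on_cmul[OF c rec_cvx] by (rule convex_on_eq) (simp add: perturbation(2))
  with perturbation(1) show ?thesis by blast
qed

end
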